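(* Assume the standing hypotheses and let $\sigma\in(0,1)$. For $(x,\lambda)\in\mathcal B((x^*,\lambda^* ),\delta)$ with $x>0,\lambda>0$, let $(\Delta x^N,\Delta\lambda^N)$ be the Newton direction for $\mu^+=\sigma\mu$ and define, for each $i$ with $x_i[\nabla^2 f(x)]_{ii}+\lambda_i\neq0$, $$\Delta x_i^S=-\frac{x_i[\nabla f(x)]_i-\mu^+}{x_i[\nabla^2 f(x)]_{ii}+\lambda_i}.$$ Then for every such $i$, $$\Delta x_i^S-\Delta x_i^N=\frac{x_i}{x_i[\nabla^2 f(x)]_{ii}+\lambda_i}\sum_{j\neq i}[\nabla^2 f(x)]_{ij}\Delta x_j^N.$$ Moreover, for every $C_1>0$ there exist $\rho>0$, $\bar\mu\in(0,\hat\mu]$ and constants $0<c\le C$ such that for all $\mu\in(0,\bar\mu]$ and all $(x,\lambda)\in\mathcal B((x^*,\lambda^* ),\delta)$ with $x>0,\lambda>0$, $\|(x,\lambda)-(x^\mu,\lambda^\mu)\|<\rho$, $\|F_\mu(x,\lambda)\|\le C_1\mu$: for all $i=1,\dots,n$, $c\le \big(x_i[\nabla^2f(x)]_{ii}+\lambda_i\big)^{-1}\le C$ (in particular the denominator is nonzero), and $|\Delta x_i^S-\Delta x_i^N|\le C\mu^2$ for all $i\in\mathcal A$.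
   Context: Problem: minimize $f(x)$ subject to $x\ge0$, $f:\mathbb R^n\to\mathbb R$ twice continuously differentiable with locally Lipschitz Hessian. Norms Euclidean; $e$ all-ones; $X=\mathrm{diag}(x)$, $\Lambda=\mathrm{diag}(\lambda)$; $F_\mu(x,\lambda)=\begin{bmatrix}\nabla f(x)-\lambda\\ \Lambda Xe-\mu e\end{bmatrix}$, $F'(x,\lambda)=\begin{bmatrix}\nabla^2f(x)&-I\\ \Lambda&X\end{bmatrix}$. The Newton direction for $\mu^+=\sigma\mu$ solves $F'(x,\lambda)(\Delta x^N,\Delta\lambda^N)=-F_{\mu^+}(x,\lambda)$. Standing hypotheses: $(x^*,\lambda^* )$ satisfies $\nabla f(x^* )=\lambda^*$, $x^*\ge0$, $\lambda^*\ge0$, $x_i^*\lambda_i^*=0$, $x^*+\lambda^*>0$, $[\nabla^2f(x^* )]_{\mathcal I\mathcal I}\succ0$, where $\mathcal A=\{i:x^*_i=0\}$, $\mathcal I=\{i:x_i^*>0\}$. $\delta>0$: $F'$ nonsingular on $\mathcal B((x^*,\lambda^* ),\delta)$ with $\|F'^{-1}\|\le M$; $\hat\mu>0$: for $\mu\in(0,\hat\mu]$ a Lipschitz barrier trajectory $(x^\mu,\lambda^\mu)\in\mathcal B((x^*,\lambda^* ),\delta)$ with $F_\mu(x^\mu,\lambda^\mu)=0$, $\|(x^\mu,\lambda^\mu)-(x^*,\lambda^* )\|\le C_4\mu$ exists. *)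

theory Defs
  imports "HOL-Analysis.Analysis"
begin

text \<open>Vectors in R^n are modelled as real^'n; g is the gradient and H the Hessian of f.
  Pairs (x, l) live in (real^'n) \<times> (real^'n), whose norm is the Euclidean norm on R^(2n).\<close>

definition Fmu :: "(real^'n::finite \<Rightarrow> real^'n) \<Rightarrow> real \<Rightarrow> real^'n \<Rightarrow> real^'n \<Rightarrow> (real^'n) \<times> (real^'n)" where
  "Fmu g mu x l = (g x - l, (\<chi> i. l$i * x$i - mu))"

definition Fprime :: "(real^'n \<Rightarrow> real^'n^'n) \<Rightarrow> real^'n \<Rightarrow> real^'n \<Rightarrow> (real^'n) \<times> (real^'n) \<Rightarrow> (real^'n) \<times> (real^'n)" where
  "Fprime H x l = (\<lambda>(dx, dl). (H x *v dx - dl, (\<chi> i. l$i * dx$i + x$i * dl$i)))"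

definition denom :: "(real^'n \<Rightarrow> real^'n^'n) \<Rightarrow> real^'n \<Rightarrow> real^'n \<Rightarrow> 'n::finite \<Rightarrow> real" where
  "denom H x l i = x$i * (H x)$i$i + l$i"

definition DxS :: "(real^'n \<Rightarrow> real^'n) \<Rightarrow> (real^'n \<Rightarrow> real^'n^'n) \<Rightarrow> real \<Rightarrow> real^'n \<Rightarrow> real^'n \<Rightarrow> 'n::finite \<Rightarrow> real" where
  "DxS g H muplus x l i = - (x$i * (g x)$i - muplus) / denom H x l i"

end

theory Submission
  imports Defs
begin

(* Eliminating \<Delta>\<lambda>_i from the i-th rows of the Newton system expresses
   (x_i H_ii + \<lambda>_i) \<Delta>x^N_i through the off-diagonal terms of row i, which is the identity.
   At the solution (xs, ls) every denominator is positive: on active indices it is ls_i > 0 by strict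
   complementarity, on inactive ones xs_i H_ii(xs) > 0 by positive definiteness of the inactive
   block; by continuity the denominators stay in some [m, D] near (xs, ls), and points close to
   the central path at small \<mu> are that near. On an active index \<lambda>_i also stays bounded away
   from 0, so the centrality residual forces x_i = O(\<mu>), while the Newton step is O(\<mu>) because
   F' has inverse bounded by M and the right-hand side is O(\<mu>). By the identity, the gap is
   x_i / (x_i H_ii + \<lambda>_i) times a row of H applied to \<Delta>x^N, hence O(\<mu>^2). *)

lemma matrix_vector_mult_nth_split_diag:
  "(A *v v)$i = A$i$i * v$i + (\<Sum>j\<in>UNIV - {i}. A$i$j * v$j)"
  by (simp add: matrix_vector_mult_def sum.remove[of UNIV i])

lemma abs_matrix_row_sum_le:
  fixes A :: "real^'n::finite^'m"
  shows "\<bar>\<Sum>j\<in>S. A$i$j * v$j\<bar> \<le> CARD('n) * norm A * norm v"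
proof -
  have "\<bar>\<Sum>j\<in>S. A$i$j * v$j\<bar> \<le> (\<Sum>j\<in>S. \<bar>A$i$j\<bar> * \<bar>v$j\<bar>)"
    using sum_abs[of "\<lambda>j. A$i$j * v$j" S] by (simp add: abs_mult)
  also have "\<dots> \<le> (\<Sum>j\<in>S. norm A * norm v)"
  proof (rule sum_mono)
    fix j
    have "\<bar>A$i$j\<bar> \<le> norm A"
      using component_le_norm_cart[of "A$i" j] Finite_Cartesian_Product.norm_nth_le[of A i] by linarith
    then show "\<bar>A$i$j\<bar> * \<bar>v$j\<bar> \<le> norm A * norm v"
      by (intro mult_mono component_le_norm_cart) auto
  qed
  also have "\<dots> \<le> (\<Sum>j\<in>(UNIV :: 'n set). norm A * norm v)"
    unfolding sum_constant by (intro mult_right_mono) (simp_all add: card_mono)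
  finally show ?thesis by simp
qed

lemma diag_pos_of_pos_def_on_support:
  fixes A :: "real^'n::finite^'n"
  assumes pd: "\<And>v. v \<noteq> 0 \<Longrightarrow> (\<forall>j. Z j \<longrightarrow> v$j = 0) \<Longrightarrow> 0 < v \<bullet> (A *v v)"
    and "\<not> Z i"
  shows "0 < A$i$i"
proof -
  have "axis i (1::real) \<noteq> 0"
    by simp
  moreover have "\<forall>j. Z j \<longrightarrow> axis i (1::real) $ j = 0"
    using assms(2) by (auto simp: axis_def)
  ultimately have "0 < axis i 1 \<bullet> (A *v axis i 1)"
    by (rule pd)
  then show ?thesis
    by (simp add: inner_axis' matrix_vector_mult_basis column_def)
qed

lemma norm_le_onorm_inv:
  fixes f :: "'a::euclidean_space \<Rightarrow> 'a"
  assumes "linear f" "bij f"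
  shows "norm v \<le> onorm (inv f) * norm (f v)"
proof -
  have "bounded_linear (inv f)"
    using assms bij_is_inj inj_linear_imp_inv_bounded_linear linear_conv_bounded_linear by blast
  then have "norm (inv f (f v)) \<le> onorm (inv f) * norm (f v)"
    by (rule onorm)
  then show ?thesis
    using assms(2) by (simp add: bij_is_inj)
qed

lemma eventually_uniform_pos_bounds:
  fixes h :: "'i \<Rightarrow> 'a \<Rightarrow> real"
  assumes "finite I" "\<And>i. i \<in> I \<Longrightarrow> (h i \<longlongrightarrow> b i) F" "\<And>i. i \<in> I \<Longrightarrow> 0 < b i"
  shows "\<exists>m>0. \<exists>D. \<forall>\<^sub>F p in F. \<forall>i\<in>I. m \<le> h i p \<and> h i p \<le> D"
  using assms
proof (induction I rule: finite_induct)
  case empty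
  show ?case by (intro exI[of _ 1]) simp
next
  case (insert k I)
  then obtain m D where "0 < m" and ev: "\<forall>\<^sub>F p in F. \<forall>i\<in>I. m \<le> h i p \<and> h i p \<le> D"
    by auto
  have hk: "(h k \<longlongrightarrow> b k) F" "0 < b k"
    using insert.prems by auto
  have "\<forall>\<^sub>F p in F. b k / 2 < h k p"
    by (rule order_tendstoD(1)[OF hk(1)]) (use hk(2) in simp)
  moreover have "\<forall>\<^sub>F p in F. h k p < b k + 1"
    by (rule order_tendstoD(2)[OF hk(1)]) simp
  ultimately have "\<forall>\<^sub>F p in F. \<forall>i\<in>insert k I. min m (b k / 2) \<le> h i p \<and> h i p \<le> max D (b k + 1)"
    using ev by eventually_elim fastforce
  moreover have "0 < min m (b k / 2)"
    using \<open>0 < m\<close> insert.prems by simp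
  ultimately show ?case by blast
qed

lemma dist_lt_through_intermediate:
  fixes p q s :: "'a::real_normed_vector"
  assumes "norm (p - q) < r / 2" "norm (q - s) \<le> C4 * \<mu>"
    and "0 < \<mu>" "\<mu> \<le> r / (2 * (\<bar>C4\<bar> + 1))"
  shows "dist p s < r"
proof -
  have "(\<bar>C4\<bar> + 1) * \<mu> \<le> r / 2"
    using assms(4) by (simp add: field_simps)
  moreover have "C4 * \<mu> \<le> (\<bar>C4\<bar> + 1) * \<mu>"
    using assms(3) by (intro mult_right_mono) auto
  moreover have "dist p s \<le> norm (p - q) + norm (q - s)"
    by (metis dist_norm dist_triangle)
  ultimately show ?thesis
    using assms(1,2) by linarith
qed

lemma newton_system_components:
  assumes "Fprime H x l (dx, dl) = - Fmu g mu x l"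
  shows "(H x *v dx)$i - dl$i = l$i - (g x)$i"
    and "l$i * dx$i + x$i * dl$i = mu - l$i * x$i"
  using assms by (auto simp: Fprime_def Fmu_def vec_eq_iff)

lemma denom_mult_newton_step:
  assumes "Fprime H x l (dx, dl) = - Fmu g mu x l"
  shows "denom H x l i * dx$i = - (x$i * (g x)$i - mu) - x$i * (\<Sum>j\<in>UNIV - {i}. (H x)$i$j * dx$j)"
proof -
  have "dl$i = (H x)$i$i * dx$i + (\<Sum>j\<in>UNIV - {i}. (H x)$i$j * dx$j) - l$i + (g x)$i"
    using newton_system_components(1)[OF assms, of i] matrix_vector_mult_nth_split_diag[of "H x" dx i]
    by simp
  with newton_system_components(2)[OF assms, of i] show ?thesis
    unfolding denom_def by (simp add: algebra_simps)
qed

lemma DxS_minus_newton_step: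
  assumes "Fprime H x l (dx, dl) = - Fmu g mu x l" "denom H x l i \<noteq> 0"
  shows "DxS g H mu x l i - dx$i = x$i / denom H x l i * (\<Sum>j\<in>UNIV - {i}. (H x)$i$j * dx$j)"
  using denom_mult_newton_step[OF assms(1), of i] assms(2)
  unfolding DxS_def by (simp add: field_simps)

lemma linear_Fprime: "linear (Fprime H x l)"
  unfolding Fprime_def
  by (rule linearI) (auto simp: vec_eq_iff algebra_simps case_prod_beta)

lemma norm_Fmu_change_mu:
  fixes mu mu' :: real and x l :: "real^'n::finite"
  shows "norm (Fmu g mu' x l) \<le> norm (Fmu g mu x l) + CARD('n) * \<bar>mu - mu'\<bar>"
proof -
  have "Fmu g mu' x l = Fmu g mu x l + (0, \<chi> i::'n. mu - mu')"
    by (simp add: Fmu_def vec_eq_iff)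
  then have "norm (Fmu g mu' x l) \<le> norm (Fmu g mu x l) + norm (\<chi> i::'n. mu - mu')"
    by (metis norm_Pair1 norm_triangle_ineq)
  also have "norm (\<chi> i::'n. mu - mu') \<le> CARD('n) * \<bar>mu - mu'\<bar>"
    using norm_le_l1_cart[of "\<chi> i::'n. mu - mu'"] by simp
  finally show ?thesis by simp
qed

lemma norm_newton_step_le:
  fixes x l dx dl :: "real^'n::finite"
  assumes newton: "Fprime H x l (dx, dl) = - Fmu g (\<sigma> * \<mu>) x l"
    and nonsing: "bij (Fprime H x l)" "onorm (inv (Fprime H x l)) \<le> M"
    and "0 \<le> \<sigma>" "\<sigma> \<le> 1" "0 \<le> \<mu>"
    and residual: "norm (Fmu g \<mu> x l) \<le> C1 * \<mu>"
  shows "norm dx \<le> M * (C1 + CARD('n)) * \<mu>"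
proof -
  have "bounded_linear (inv (Fprime H x l))"
    using linear_Fprime nonsing(1) bij_is_inj inj_linear_imp_inv_bounded_linear linear_conv_bounded_linear
    by blast
  then have "0 \<le> M"
    using onorm_pos_le nonsing(2) order_trans by blast
  have "\<bar>\<mu> - \<sigma> * \<mu>\<bar> \<le> \<mu>"
    using assms(4-6) by (simp add: mult_left_le_one_le)
  then have "CARD('n) * \<bar>\<mu> - \<sigma> * \<mu>\<bar> \<le> CARD('n) * \<mu>"
    by (rule mult_left_mono) simp
  then have "norm (Fmu g (\<sigma> * \<mu>) x l) \<le> C1 * \<mu> + CARD('n) * \<mu>"
    using norm_Fmu_change_mu[of g "\<sigma> * \<mu>" x l \<mu>] residual by linarith
  have "norm dx \<le> norm (dx, dl)"
    by (rule norm_fst_le)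
  also have "\<dots> \<le> onorm (inv (Fprime H x l)) * norm (Fmu g (\<sigma> * \<mu>) x l)"
    using norm_le_onorm_inv[OF linear_Fprime nonsing(1), of "(dx, dl)"] newton by simp
  also have "\<dots> \<le> M * (C1 * \<mu> + CARD('n) * \<mu>)"
    using \<open>0 \<le> M\<close> \<open>norm (Fmu g (\<sigma> * \<mu>) x l) \<le> _\<close> nonsing(2)
    by (intro mult_mono) auto
  finally show ?thesis by (simp add: algebra_simps)
qed

lemma denom_pos_at_solution:
  fixes xs ls :: "real^'n::finite"
  assumes pd_II: "\<And>v. v \<noteq> 0 \<Longrightarrow> (\<forall>i. xs$i = 0 \<longrightarrow> v$i = 0) \<Longrightarrow> v \<bullet> (H xs *v v) > 0"
    and "\<forall>i. xs$i \<ge> 0" "\<forall>i. xs$i * ls$i = 0" "\<forall>i. xs$i + ls$i > 0"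
  shows "0 < denom H xs ls i"
proof (cases "xs$i = 0")
  case True
  then show ?thesis using assms(4)[rule_format, of i] by (simp add: denom_def)
next
  case False
  then have "0 < xs$i" "ls$i = 0" using assms(2,3) by (auto simp: order_le_less)
  moreover have "0 < (H xs)$i$i"
    using diag_pos_of_pos_def_on_support[of "\<lambda>i. xs$i = 0", OF pd_II False] by simp
  ultimately show ?thesis by (simp add: denom_def)
qed

lemma tendsto_fst_snd_nhds:
  shows "(fst \<longlongrightarrow> x) (nhds (x, y))" and "(snd \<longlongrightarrow> y) (nhds (x, y))"
  using tendsto_fst[OF filterlim_ident] tendsto_snd[OF filterlim_ident] by fastforce+

lemma tendsto_continuous_comp_fst_nhds:
  fixes f :: "'a::t2_space \<Rightarrow> 'b::topological_space"
  assumes "continuous_on UNIV f"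
  shows "((\<lambda>p. f (fst p)) \<longlongrightarrow> f x) (nhds (x, y))"
proof -
  have "isCont f x"
    using assms by (simp add: continuous_on_eq_continuous_at)
  then show ?thesis
    by (rule isCont_tendsto_compose) (rule tendsto_fst_snd_nhds)
qed

lemma tendsto_denom:
  assumes "continuous_on UNIV H"
  shows "((\<lambda>p. denom H (fst p) (snd p) i) \<longlongrightarrow> denom H x l i) (nhds (x, l))"
  unfolding denom_def
  by (intro tendsto_intros tendsto_continuous_comp_fst_nhds[OF assms] tendsto_fst_snd_nhds)

lemma uniform_bounds_near_solution:
  fixes xs ls :: "real^'n::finite" and H :: "real^'n \<Rightarrow> real^'n^'n"
  assumes cont: "continuous_on UNIV H"
    and pd_II: "\<And>v. v \<noteq> 0 \<Longrightarrow> (\<forall>i. xs$i = 0 \<longrightarrow> v$i = 0) \<Longrightarrow> v \<bullet> (H xs *v v) > 0"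
    and "\<forall>i. xs$i \<ge> 0" "\<forall>i. xs$i * ls$i = 0" "\<forall>i. xs$i + ls$i > 0"
  shows "\<exists>m>0. \<exists>D. \<exists>lmin>0. \<exists>r>0. \<forall>x l. dist (x, l) (xs, ls) < r \<longrightarrow>
           (\<forall>i. m \<le> denom H x l i \<and> denom H x l i \<le> D)
         \<and> (\<forall>i. xs$i = 0 \<longrightarrow> lmin \<le> l$i)
         \<and> norm (H x) < norm (H xs) + 1"
proof -
  have "0 < denom H xs ls i" for i
    using denom_pos_at_solution[of xs H ls i] pd_II assms(3-5) by blast
  then have "\<exists>m>0. \<exists>D. \<forall>\<^sub>F p in nhds (xs, ls). \<forall>i\<in>UNIV.
      m \<le> denom H (fst p) (snd p) i \<and> denom H (fst p) (snd p) i \<le> D"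
    by (intro eventually_uniform_pos_bounds[where b = "\<lambda>i. denom H xs ls i"] tendsto_denom[OF cont]) auto
  then obtain m D where "0 < m" and ev_denom:
      "\<forall>\<^sub>F p in nhds (xs, ls). \<forall>i\<in>UNIV. m \<le> denom H (fst p) (snd p) i \<and> denom H (fst p) (snd p) i \<le> D"
    by blast
  have "0 < ls$i" if "xs$i = 0" for i
    using assms(5) that by (metis add_0)
  then have "\<exists>lmin>0. \<exists>lmax. \<forall>\<^sub>F p in nhds (xs, ls). \<forall>i\<in>{i. xs$i = 0}.
      lmin \<le> snd p $ i \<and> snd p $ i \<le> lmax"
    by (intro eventually_uniform_pos_bounds[where b = "\<lambda>i. ls$i"] tendsto_vec_nth tendsto_fst_snd_nhds) auto
  then obtain lmin lmax where "0 < lmin" and ev_active: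
      "\<forall>\<^sub>F p in nhds (xs, ls). \<forall>i\<in>{i. xs$i = 0}. lmin \<le> snd p $ i \<and> snd p $ i \<le> lmax"
    by blast
  have "((\<lambda>p. norm (H (fst p))) \<longlongrightarrow> norm (H xs)) (nhds (xs, ls))"
    by (intro tendsto_norm tendsto_continuous_comp_fst_nhds[OF cont])
  then have ev_hess: "\<forall>\<^sub>F p in nhds (xs, ls). norm (H (fst p)) < norm (H xs) + 1"
    by (rule order_tendstoD(2)) simp
  obtain r where "0 < r" and r: "\<And>p. dist p (xs, ls) < r \<Longrightarrow>
      (\<forall>i. m \<le> denom H (fst p) (snd p) i \<and> denom H (fst p) (snd p) i \<le> D)
    \<and> (\<forall>i. xs$i = 0 \<longrightarrow> lmin \<le> snd p $ i) \<and> norm (H (fst p)) < norm (H xs) + 1"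
    using eventually_conj[OF ev_denom eventually_conj[OF ev_active ev_hess]]
    unfolding eventually_nhds_metric by auto
  show ?thesis
    using \<open>0 < m\<close> \<open>0 < lmin\<close> \<open>0 < r\<close> r[of "(x, l)" for x l, simplified] by blast
qed

lemma primal_component_le_of_residual:
  assumes residual: "norm (Fmu g \<mu> x l) \<le> C1 * \<mu>"
    and "0 < lmin" "lmin \<le> l$i" "0 \<le> x$i"
  shows "x$i \<le> (1 + C1) * \<mu> / lmin"
proof -
  have "\<bar>l$i * x$i - \<mu>\<bar> \<le> norm (snd (Fmu g \<mu> x l))"
    using component_le_norm_cart[of "snd (Fmu g \<mu> x l)" i] by (simp add: Fmu_def)
  also have "\<dots> \<le> C1 * \<mu>"
    using norm_snd_le[of "snd (Fmu g \<mu> x l)" "fst (Fmu g \<mu> x l)"] residual by simp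
  finally have "lmin * x$i \<le> (1 + C1) * \<mu>"
    using mult_right_mono[OF assms(3,4)] by (simp add: algebra_simps abs_le_iff)
  then show ?thesis
    using assms(2) by (simp add: field_simps)
qed

lemma newton_gap_le:
  fixes x l dx dl :: "real^'n::finite" and a b m Hb :: real
  assumes newton: "Fprime H x l (dx, dl) = - Fmu g mu x l"
    and "0 < m" "m \<le> denom H x l i" "0 \<le> x$i" "x$i \<le> a" "norm (H x) \<le> Hb" "norm dx \<le> b"
  shows "\<bar>DxS g H mu x l i - dx$i\<bar> \<le> a / m * (CARD('n) * Hb * b)"
proof -
  have "0 < denom H x l i"
    using assms(2,3) by linarith
  then have "\<bar>DxS g H mu x l i - dx$i\<bar> = x$i / denom H x l i * \<bar>\<Sum>j\<in>UNIV - {i}. (H x)$i$j * dx$j\<bar>"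
    using DxS_minus_newton_step[OF newton] assms(4) by (simp add: abs_mult)
  also have "\<dots> \<le> a / m * (CARD('n) * Hb * b)"
  proof (intro mult_mono frac_le)
    have "0 \<le> Hb"
      using assms(6) norm_ge_zero order_trans by blast
    then have "CARD('n) * norm (H x) * norm dx \<le> CARD('n) * Hb * b"
      using assms(6,7) by (intro mult_mono mult_left_mono) auto
    then show "\<bar>\<Sum>j\<in>UNIV - {i}. (H x)$i$j * dx$j\<bar> \<le> CARD('n) * Hb * b"
      using abs_matrix_row_sum_le[where S = "UNIV - {i}" and A = "H x" and i = i and v = dx] by linarith
  qed (use assms in auto)
  finally show ?thesis .
qed

lemma newton_gap_active_le:
  fixes x l dx dl :: "real^'n::finite" and \<sigma> \<mu> C1 M m lmin Hb :: real
  assumes newton: "Fprime H x l (dx, dl) = - Fmu g (\<sigma> * \<mu>) x l"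
    and nonsing: "bij (Fprime H x l)" "onorm (inv (Fprime H x l)) \<le> M"
    and "0 \<le> \<sigma>" "\<sigma> \<le> 1" "0 \<le> \<mu>"
    and residual: "norm (Fmu g \<mu> x l) \<le> C1 * \<mu>"
    and "0 < m" "m \<le> denom H x l i" "0 < lmin" "lmin \<le> l$i" "0 \<le> x$i" "norm (H x) \<le> Hb"
  shows "\<bar>DxS g H (\<sigma> * \<mu>) x l i - dx$i\<bar>
    \<le> (1 + C1) / lmin / m * (CARD('n) * Hb) * (M * (C1 + CARD('n))) * \<mu>^2"
proof -
  have "x$i \<le> (1 + C1) * \<mu> / lmin"
    using assms(10-12) by (rule primal_component_le_of_residual[OF residual])
  moreover have "norm dx \<le> M * (C1 + CARD('n)) * \<mu>"
    using assms(1-7) by (rule norm_newton_step_le)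
  ultimately have "\<bar>DxS g H (\<sigma> * \<mu>) x l i - dx$i\<bar>
      \<le> (1 + C1) * \<mu> / lmin / m * (CARD('n) * Hb * (M * (C1 + CARD('n)) * \<mu>))"
    using assms(8,9,12,13) by (intro newton_gap_le[OF newton]) auto
  also have "\<dots> = (1 + C1) / lmin / m * (CARD('n) * Hb) * (M * (C1 + CARD('n))) * \<mu>^2"
    by (simp add: power2_eq_square)
  finally show ?thesis .
qed

lemma newton_gap_quadratic_near_central_path:
  fixes H :: "real^'n::finite \<Rightarrow> real^'n^'n" and xs ls :: "real^'n"
    and xmu lmu :: "real \<Rightarrow> real^'n"
  assumes hess_cont: "continuous_on UNIV H"
    and pd_II: "\<And>v. v \<noteq> 0 \<Longrightarrow> (\<forall>i. xs$i = 0 \<longrightarrow> v$i = 0) \<Longrightarrow> v \<bullet> (H xs *v v) > 0"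
    and solution: "\<forall>i. xs$i \<ge> 0" "\<forall>i. xs$i * ls$i = 0" "\<forall>i. xs$i + ls$i > 0"
    and nonsing: "\<And>x l. (x, l) \<in> ball (xs, ls) \<delta> \<Longrightarrow>
        bij (Fprime H x l) \<and> onorm (inv (Fprime H x l)) \<le> M"
    and "\<mu>hat > 0"
    and traj_close: "\<And>\<mu>. \<mu> \<in> {0<..\<mu>hat} \<Longrightarrow> norm ((xmu \<mu>, lmu \<mu>) - (xs, ls)) \<le> C4 * \<mu>"
    and \<sigma>: "0 \<le> \<sigma>" "\<sigma> \<le> 1"
  shows "\<exists>\<rho>>0. \<exists>\<mu>bar. 0 < \<mu>bar \<and> \<mu>bar \<le> \<mu>hat \<and> (\<exists>c C. 0 < c \<and> c \<le> C \<and>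
          (\<forall>\<mu> x l dx dl. 0 < \<mu> \<and> \<mu> \<le> \<mu>bar \<and> (x, l) \<in> ball (xs, ls) \<delta>
             \<and> (\<forall>i. x$i > 0) \<and> (\<forall>i. l$i > 0)
             \<and> norm ((x, l) - (xmu \<mu>, lmu \<mu>)) < \<rho>
             \<and> norm (Fmu g \<mu> x l) \<le> C1 * \<mu>
             \<and> Fprime H x l (dx, dl) = - Fmu g (\<sigma> * \<mu>) x l \<longrightarrow>
               (\<forall>i. denom H x l i \<noteq> 0 \<and> c \<le> inverse (denom H x l i) \<and> inverse (denom H x l i) \<le> C)
             \<and> (\<forall>i. xs$i = 0 \<longrightarrow> \<bar>DxS g H (\<sigma> * \<mu>) x l i - dx$i\<bar> \<le> C * \<mu>^2)))"
proof -
  obtain m D lmin r where "0 < m" "0 < lmin" "0 < r" and bounds: "\<And>x l. dist (x, l) (xs, ls) < r \<Longrightarrow>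
      (\<forall>i. m \<le> denom H x l i \<and> denom H x l i \<le> D) \<and> (\<forall>i. xs$i = 0 \<longrightarrow> lmin \<le> l$i)
    \<and> norm (H x) < norm (H xs) + 1"
    using uniform_bounds_near_solution[OF hess_cont pd_II solution] by blast
  have "m \<le> D"
    using bounds[of xs ls] \<open>0 < r\<close> by auto
  define K where "K = (1 + C1) / lmin / m * (CARD('n) * (norm (H xs) + 1)) * (M * (C1 + CARD('n)))"
  define C where "C = max (1 / m) K"
  define \<mu>bar where "\<mu>bar = min \<mu>hat (r / (2 * (\<bar>C4\<bar> + 1)))"
  have "(\<forall>i. denom H x l i \<noteq> 0 \<and> 1 / D \<le> inverse (denom H x l i) \<and> inverse (denom H x l i) \<le> C)
      \<and> (\<forall>i. xs$i = 0 \<longrightarrow> \<bar>DxS g H (\<sigma> * \<mu>) x l i - dx$i\<bar> \<le> C * \<mu>^2)"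
    if h: "0 < \<mu>" "\<mu> \<le> \<mu>bar" "(x, l) \<in> ball (xs, ls) \<delta>" "\<forall>i. x$i > 0"
      "norm ((x, l) - (xmu \<mu>, lmu \<mu>)) < r / 2" "norm (Fmu g \<mu> x l) \<le> C1 * \<mu>"
      "Fprime H x l (dx, dl) = - Fmu g (\<sigma> * \<mu>) x l" for \<mu> x l dx dl
  proof -
    have "dist (x, l) (xs, ls) < r"
      using h(1,2,5) traj_close[of \<mu>]
      by (intro dist_lt_through_intermediate[where q = "(xmu \<mu>, lmu \<mu>)"]) (auto simp: \<mu>bar_def)
    note bounds_xl = bounds[OF this]
    have "\<bar>DxS g H (\<sigma> * \<mu>) x l i - dx$i\<bar> \<le> C * \<mu>^2" if "xs$i = 0" for i
    proof -
      have "\<bar>DxS g H (\<sigma> * \<mu>) x l i - dx$i\<bar> \<le> K * \<mu>^2"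
        unfolding K_def using nonsing[OF h(3)] h(1,6) \<sigma> \<open>0 < m\<close> \<open>0 < lmin\<close> bounds_xl that \<open>\<forall>i. x$i > 0\<close>
        by (intro newton_gap_active_le[OF \<open>Fprime H x l (dx, dl) = _\<close>]) (auto simp: less_imp_le)
      also have "\<dots> \<le> C * \<mu>^2"
        by (simp add: C_def mult_right_mono)
      finally show ?thesis .
    qed
    moreover have "denom H x l i \<noteq> 0 \<and> 1 / D \<le> inverse (denom H x l i) \<and> inverse (denom H x l i) \<le> C" for i
    proof -
      have "m \<le> denom H x l i" "denom H x l i \<le> D"
        using bounds_xl by auto
      then show ?thesis
        using \<open>0 < m\<close> by (auto simp: C_def inverse_eq_divide frac_le max.coboundedI1)
    qed
    ultimately show ?thesis by blast
  qed
  note pointwise = this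
  show ?thesis
  proof (intro exI conjI)
    show "0 < r / 2" "0 < \<mu>bar" "\<mu>bar \<le> \<mu>hat" "0 < 1 / D" "1 / D \<le> C"
      using \<open>\<mu>hat > 0\<close> \<open>0 < r\<close> \<open>0 < m\<close> \<open>m \<le> D\<close> by (auto simp: \<mu>bar_def C_def frac_le max.coboundedI1)
  qed (use pointwise in blast)
qed

theorem proposition1:
  fixes f :: "real^'n \<Rightarrow> real"
    and g :: "real^'n \<Rightarrow> real^'n"
    and H :: "real^'n \<Rightarrow> real^'n^'n"
    and xs ls :: "real^'n"
    and \<delta> M \<mu>hat C4 \<sigma> :: real
    and xmu lmu :: "real \<Rightarrow> real^'n"
  assumes grad: "\<And>x. (f has_derivative (\<lambda>h. g x \<bullet> h)) (at x)"
    and hess: "\<And>x. (g has_derivative (\<lambda>h. H x *v h)) (at x)"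
    and hess_cont: "continuous_on UNIV H"
    and hess_loclip: "\<And>x. \<exists>r>0. \<exists>L. \<forall>y\<in>ball x r. \<forall>z\<in>ball x r. norm (H y - H z) \<le> L * norm (y - z)"
    and kkt_grad: "g xs = ls"
    and xs_nonneg: "\<forall>i. xs$i \<ge> 0"
    and ls_nonneg: "\<forall>i. ls$i \<ge> 0"
    and compl: "\<forall>i. xs$i * ls$i = 0"
    and strict_compl: "\<forall>i. xs$i + ls$i > 0"
    and pd_II: "\<And>v. v \<noteq> 0 \<Longrightarrow> (\<forall>i. xs$i = 0 \<longrightarrow> v$i = 0) \<Longrightarrow> v \<bullet> (H xs *v v) > 0"
    and \<delta>_pos: "\<delta> > 0"
    and nonsing: "\<And>x l. (x, l) \<in> ball (xs, ls) \<delta> \<Longrightarrow>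
        bij (Fprime H x l) \<and> onorm (inv (Fprime H x l)) \<le> M"
    and \<mu>hat_pos: "\<mu>hat > 0"
    and traj_lip: "\<exists>L. \<forall>\<mu>1\<in>{0<..\<mu>hat}. \<forall>\<mu>2\<in>{0<..\<mu>hat}.
        norm ((xmu \<mu>1, lmu \<mu>1) - (xmu \<mu>2, lmu \<mu>2)) \<le> L * \<bar>\<mu>1 - \<mu>2\<bar>"
    and traj_pos: "\<And>\<mu>. \<mu> \<in> {0<..\<mu>hat} \<Longrightarrow> (\<forall>i. xmu \<mu> $ i > 0 \<and> lmu \<mu> $ i > 0)"
    and traj_ball: "\<And>\<mu>. \<mu> \<in> {0<..\<mu>hat} \<Longrightarrow> (xmu \<mu>, lmu \<mu>) \<in> ball (xs, ls) \<delta>"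
    and traj_eq: "\<And>\<mu>. \<mu> \<in> {0<..\<mu>hat} \<Longrightarrow> Fmu g \<mu> (xmu \<mu>) (lmu \<mu>) = 0"
    and traj_close: "\<And>\<mu>. \<mu> \<in> {0<..\<mu>hat} \<Longrightarrow> norm ((xmu \<mu>, lmu \<mu>) - (xs, ls)) \<le> C4 * \<mu>"
    and \<sigma>: "0 < \<sigma>" "\<sigma> < 1"
  shows
    "(\<forall>\<mu>>0. \<forall>x l dx dl. (x, l) \<in> ball (xs, ls) \<delta> \<and> (\<forall>i. x$i > 0) \<and> (\<forall>i. l$i > 0)
        \<and> Fprime H x l (dx, dl) = - Fmu g (\<sigma> * \<mu>) x l \<longrightarrow>
        (\<forall>i. denom H x l i \<noteq> 0 \<longrightarrow>
           DxS g H (\<sigma> * \<mu>) x l i - dx$i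
             = x$i / denom H x l i * (\<Sum>j\<in>UNIV - {i}. (H x)$i$j * dx$j)))
     \<and> (\<forall>C1>0. \<exists>\<rho>>0. \<exists>\<mu>bar. 0 < \<mu>bar \<and> \<mu>bar \<le> \<mu>hat \<and> (\<exists>c C. 0 < c \<and> c \<le> C \<and>
          (\<forall>\<mu> x l dx dl. 0 < \<mu> \<and> \<mu> \<le> \<mu>bar \<and> (x, l) \<in> ball (xs, ls) \<delta>
             \<and> (\<forall>i. x$i > 0) \<and> (\<forall>i. l$i > 0)
             \<and> norm ((x, l) - (xmu \<mu>, lmu \<mu>)) < \<rho>
             \<and> norm (Fmu g \<mu> x l) \<le> C1 * \<mu>
             \<and> Fprime H x l (dx, dl) = - Fmu g (\<sigma> * \<mu>) x l \<longrightarrow>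
               (\<forall>i. denom H x l i \<noteq> 0 \<and> c \<le> inverse (denom H x l i) \<and> inverse (denom H x l i) \<le> C)
             \<and> (\<forall>i. xs$i = 0 \<longrightarrow> \<bar>DxS g H (\<sigma> * \<mu>) x l i - dx$i\<bar> \<le> C * \<mu>^2))))"
  using \<sigma>
  by (intro conjI allI impI newton_gap_quadratic_near_central_path[OF hess_cont _ xs_nonneg compl
        strict_compl nonsing \<mu>hat_pos traj_close])
    (blast intro: pd_II DxS_minus_newton_step less_imp_le)+

end
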